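(* Let $N$ be a tree-based network. Then $|Sup(N)|$ equals the number of supporting sets for $\mathcal{J}_N$.
   Context: A phylogenetic network on a nonempty finite set $X$ is a rooted acyclic digraph with no parallel arcs such that: the unique root has out-degree at least one; $X$ is exactly the set of vertices of out-degree zero (leaves), each of in-degree one; every other vertex either has in-degree one and out-degree at least two (a tree vertex) or in-degree at least two and out-degree one (a reticulation). If $|X|=1$, the network may also consist of the single vertex in $X$. An omnian is a non-leaf vertex all of whose children are reticulations. $N$ is tree-based if it has a spanning tree rooted at the root of $N$ all of whose leaves lie in $X$; a support tree for $N$ is such a spanning tree, i.e., a subgraph of $N$ containing all vertices of $N$ that is a directed tree rooted at the root of $N$ whose leaf set is exactly $X$. $Sup(N)$ denotes the set of support trees for $N$ (distinguished by their arc sets). Let $R_t$ be the set of reticulations of $N$ with no reticulation parent, and $Q_t$ the set of vertices of $N$ having a child in $R_t$. $\mathcal{J}_N$ is the bipartite graph with vertex bipartition $\{Q_t,R_t\}$ and an edge $\{q,r\}$ for each arc $(q,r)$ of $N$ with $q\in Q_t$, $r\in R_t$. A supporting set for $\mathcal{J}_N$ is a set $E$ of edges of $\mathcal{J}_N$ such that each omnian in $Q_t$ is incident with at least one edge of $E$ and each vertex of $R_t$ is incident with exactly one edge of $E$. *)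

theory Defs
  imports Main
begin

text \<open>A directed graph is given by a vertex set V and an arc set A of ordered pairs
(so there are no parallel arcs by construction).\<close>

definition indeg :: "('v \<times> 'v) set \<Rightarrow> 'v \<Rightarrow> nat" where
  "indeg A v = card {u. (u, v) \<in> A}"

definition outdeg :: "('v \<times> 'v) set \<Rightarrow> 'v \<Rightarrow> nat" where
  "outdeg A v = card {w. (v, w) \<in> A}"

definition net_root :: "'v set \<Rightarrow> ('v \<times> 'v) set \<Rightarrow> 'v" where
  "net_root V A = (THE r. r \<in> V \<and> indeg A r = 0)"

definition phylo_net :: "'v set \<Rightarrow> ('v \<times> 'v) set \<Rightarrow> 'v set \<Rightarrow> bool" where
  "phylo_net V A X \<longleftrightarrow>
     finite V \<and> A \<subseteq> V \<times> V \<and> X \<noteq> {} \<and> X \<subseteq> V \<and> acyclic A \<and>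
     (\<exists>!r. r \<in> V \<and> indeg A r = 0) \<and>
     (\<forall>v\<in>V. (net_root V A, v) \<in> A\<^sup>*) \<and>
     ((card X = 1 \<and> V = X \<and> A = {}) \<or>
      (outdeg A (net_root V A) \<ge> 1 \<and>
       X = {v \<in> V. outdeg A v = 0} \<and>
       (\<forall>x\<in>X. indeg A x = 1) \<and>
       (\<forall>v\<in>V - X - {net_root V A}.
          (indeg A v = 1 \<and> outdeg A v \<ge> 2) \<or> (indeg A v \<ge> 2 \<and> outdeg A v = 1))))"

definition reticulation :: "'v set \<Rightarrow> ('v \<times> 'v) set \<Rightarrow> 'v \<Rightarrow> bool" where
  "reticulation V A v \<longleftrightarrow> v \<in> V \<and> indeg A v \<ge> 2 \<and> outdeg A v = 1"

definition omnian :: "'v set \<Rightarrow> ('v \<times> 'v) set \<Rightarrow> 'v set \<Rightarrow> 'v \<Rightarrow> bool" where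
  "omnian V A X v \<longleftrightarrow> v \<in> V \<and> v \<notin> X \<and> (\<forall>c. (v, c) \<in> A \<longrightarrow> reticulation V A c)"

definition support_tree :: "'v set \<Rightarrow> ('v \<times> 'v) set \<Rightarrow> 'v set \<Rightarrow> ('v \<times> 'v) set \<Rightarrow> bool" where
  "support_tree V A X T \<longleftrightarrow>
     T \<subseteq> A \<and>
     indeg T (net_root V A) = 0 \<and>
     (\<forall>v\<in>V - {net_root V A}. indeg T v = 1) \<and>
     (\<forall>v\<in>V. (net_root V A, v) \<in> T\<^sup>*) \<and>
     {v \<in> V. outdeg T v = 0} = X"

definition SupTrees :: "'v set \<Rightarrow> ('v \<times> 'v) set \<Rightarrow> 'v set \<Rightarrow> ('v \<times> 'v) set set" where
  "SupTrees V A X = {T. support_tree V A X T}"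

definition tree_based :: "'v set \<Rightarrow> ('v \<times> 'v) set \<Rightarrow> 'v set \<Rightarrow> bool" where
  "tree_based V A X \<longleftrightarrow> (\<exists>T. support_tree V A X T)"

definition R_t :: "'v set \<Rightarrow> ('v \<times> 'v) set \<Rightarrow> 'v set" where
  "R_t V A = {r. reticulation V A r \<and> \<not> (\<exists>p. (p, r) \<in> A \<and> reticulation V A p)}"

definition Q_t :: "'v set \<Rightarrow> ('v \<times> 'v) set \<Rightarrow> 'v set" where
  "Q_t V A = {q \<in> V. \<exists>r \<in> R_t V A. (q, r) \<in> A}"

definition J_edges :: "'v set \<Rightarrow> ('v \<times> 'v) set \<Rightarrow> 'v set set" where
  "J_edges V A = {{q, r} | q r. (q, r) \<in> A \<and> q \<in> Q_t V A \<and> r \<in> R_t V A}"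

definition supporting_set :: "'v set \<Rightarrow> ('v \<times> 'v) set \<Rightarrow> 'v set \<Rightarrow> 'v set set \<Rightarrow> bool" where
  "supporting_set V A X E \<longleftrightarrow>
     E \<subseteq> J_edges V A \<and>
     (\<forall>q \<in> Q_t V A. omnian V A X q \<longrightarrow> (\<exists>e \<in> E. q \<in> e)) \<and>
     (\<forall>r \<in> R_t V A. card {e \<in> E. r \<in> e} = 1)"

end

theory Submission
  imports Defs
begin

text \<open>
  A support tree T has no freedom outside R_t: it must contain the unique arc entering each tree
  vertex and the unique arc leaving each reticulation, so a reticulation with a reticulation parent
  is entered through that arc. Hence T is determined by the parent it picks for each vertex of R_t,
  i.e. by the edges of J_N it uses; these form a supporting set, because an omnian needs a child in T.
  Conversely, completing a supporting set by the forced arcs yields a support tree. Tree-basedness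
  enters only through two consequences: a reticulation has at most one reticulation parent, and
  every omnian tree vertex lies in Q_t.
\<close>

lemma card_eq_1_iff_ex1: "card S = 1 \<longleftrightarrow> (\<exists>!x. x \<in> S)"
  by (auto simp: card_1_singleton_iff)

lemma indeg_eq_1_iff: "indeg A v = 1 \<longleftrightarrow> (\<exists>!u. (u, v) \<in> A)"
  unfolding indeg_def card_eq_1_iff_ex1 by simp

lemma outdeg_eq_1_iff: "outdeg A v = 1 \<longleftrightarrow> (\<exists>!w. (v, w) \<in> A)"
  unfolding outdeg_def card_eq_1_iff_ex1 by simp

lemma indeg_eq_0_iff: "finite A \<Longrightarrow> indeg A v = 0 \<longleftrightarrow> (\<forall>u. (u, v) \<notin> A)"
  using finite_Image[of "A\<inverse>" "{v}"] unfolding indeg_def by (simp add: Image_def)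

lemma outdeg_eq_0_iff: "finite A \<Longrightarrow> outdeg A v = 0 \<longleftrightarrow> (\<forall>w. (v, w) \<notin> A)"
  using finite_Image[of A "{v}"] unfolding outdeg_def by (simp add: Image_def)

lemma reticulation_child_unique:
  "reticulation V A p \<Longrightarrow> (p, v) \<in> A \<Longrightarrow> (p, w) \<in> A \<Longrightarrow> v = w"
  unfolding reticulation_def outdeg_eq_1_iff by blast

lemma reachable_from_root_if_parents:
  assumes "wf A" "T \<subseteq> A" "\<And>v. v \<in> V \<Longrightarrow> v \<noteq> r \<Longrightarrow> \<exists>u \<in> V. (u, v) \<in> T" "v \<in> V"
  shows "(r, v) \<in> T\<^sup>*"
  using assms(4)
proof (induction v rule: wf_induct_rule[OF assms(1)])
  case (1 v)
  show ?case
  proof (cases "v = r")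
    case False
    then obtain u where "u \<in> V" "(u, v) \<in> T" using assms(3) 1 by blast
    then show ?thesis using 1 assms(2) by (meson rtrancl.rtrancl_into_rtrancl subsetD)
  qed simp
qed

lemma R_t_reticulation: "r \<in> R_t V A \<Longrightarrow> reticulation V A r"
  unfolding R_t_def by blast

lemma Q_t_not_reticulation: "q \<in> Q_t V A \<Longrightarrow> \<not> reticulation V A q"
  unfolding Q_t_def R_t_def by blast

definition used_J_edges :: "'v set \<Rightarrow> ('v \<times> 'v) set \<Rightarrow> ('v \<times> 'v) set \<Rightarrow> 'v set set" where
  "used_J_edges V A T = {{q, r} | q r. (q, r) \<in> T \<and> r \<in> R_t V A}"

definition tree_of_J_edges :: "'v set \<Rightarrow> ('v \<times> 'v) set \<Rightarrow> 'v set set \<Rightarrow> ('v \<times> 'v) set" where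
  "tree_of_J_edges V A E =
     {(u, v) \<in> A. \<not> reticulation V A v \<or> (v \<notin> R_t V A \<and> reticulation V A u) \<or>
                  (v \<in> R_t V A \<and> {u, v} \<in> E)}"

lemma used_J_edge_at_R_t:
  assumes "T \<subseteq> A" "e \<in> used_J_edges V A T" "r \<in> e" "r \<in> R_t V A"
  shows "\<exists>q. e = {q, r} \<and> (q, r) \<in> T"
proof -
  obtain q r' where e: "e = {q, r'}" "(q, r') \<in> T" "r' \<in> R_t V A"
    using assms(2) unfolding used_J_edges_def by blast
  have "(r, r') \<notin> A" using assms(4) e(3) R_t_reticulation unfolding R_t_def by blast
  then have "r = r'" using assms(1,3) e by blast
  with e show ?thesis by blast
qed

lemma J_edge_at_R_t:
  assumes "e \<in> J_edges V A" "r \<in> e" "r \<in> R_t V A"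
  shows "\<exists>q. e = {q, r} \<and> (q, r) \<in> A \<and> q \<in> Q_t V A"
proof -
  obtain q r' where e: "e = {q, r'}" "(q, r') \<in> A" "q \<in> Q_t V A" "r' \<in> R_t V A"
    using assms(1) unfolding J_edges_def by blast
  have "r \<noteq> q" using assms(3) e(3) R_t_reticulation Q_t_not_reticulation by metis
  then have "r = r'" using assms(2) e(1) by blast
  with e show ?thesis by blast
qed

lemma used_J_edges_tree_of_J_edges:
  assumes "E \<subseteq> J_edges V A"
  shows "used_J_edges V A (tree_of_J_edges V A E) = E"
proof
  show "used_J_edges V A (tree_of_J_edges V A E) \<subseteq> E"
    by (auto simp: used_J_edges_def tree_of_J_edges_def dest: R_t_reticulation)
  show "E \<subseteq> used_J_edges V A (tree_of_J_edges V A E)"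
  proof
    fix e assume "e \<in> E"
    then obtain q r where "e = {q, r}" "(q, r) \<in> A" "r \<in> R_t V A"
      using assms unfolding J_edges_def by blast
    with \<open>e \<in> E\<close> show "e \<in> used_J_edges V A (tree_of_J_edges V A E)"
      unfolding used_J_edges_def tree_of_J_edges_def by blast
  qed
qed

locale phylo_network =
  fixes V :: "'v set" and A :: "('v \<times> 'v) set" and X :: "'v set"
  assumes phylo_net: "phylo_net V A X"
begin

lemma finite_V: "finite V"
  and arcs_in_V: "A \<subseteq> V \<times> V"
  and leaves_in_V: "X \<subseteq> V"
  and acyclic_arcs: "acyclic A"
  using phylo_net unfolding phylo_net_def by auto

lemma finite_arcs: "finite A"
  using finite_subset[OF arcs_in_V] finite_V by blast

lemma wf_arcs: "wf A"
  using finite_acyclic_wf[OF finite_arcs acyclic_arcs] .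

lemma root_in_V: "net_root V A \<in> V"
  and indeg_root: "indeg A (net_root V A) = 0"
proof -
  have "\<exists>!r. r \<in> V \<and> indeg A r = 0"
    using phylo_net unfolding phylo_net_def by blast
  then have "net_root V A \<in> V \<and> indeg A (net_root V A) = 0"
    unfolding net_root_def by (rule theI')
  then show "net_root V A \<in> V" "indeg A (net_root V A) = 0" by auto
qed

lemma no_arc_into_root: "(u, net_root V A) \<notin> A"
  using indeg_root indeg_eq_0_iff[OF finite_arcs] by blast

lemma leaves_eq_sinks: "X = {v \<in> V. outdeg A v = 0}"
  using phylo_net unfolding phylo_net_def by (auto simp: outdeg_def)

lemma non_root_indeg_1_or_reticulation:
  assumes "v \<in> V" "v \<noteq> net_root V A"
  shows "indeg A v = 1 \<or> reticulation V A v"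
proof -
  consider (single) "card X = 1" "V = X"
    | (general) "\<forall>x\<in>X. indeg A x = 1"
        "\<forall>v\<in>V - X - {net_root V A}.
          (indeg A v = 1 \<and> outdeg A v \<ge> 2) \<or> (indeg A v \<ge> 2 \<and> outdeg A v = 1)"
    using phylo_net unfolding phylo_net_def by blast
  then show ?thesis
  proof cases
    case single
    then show ?thesis using assms root_in_V by (metis card_1_singletonE singletonD)
  next
    case general
    then show ?thesis using assms unfolding reticulation_def by blast
  qed
qed

lemma leaf_no_child: "x \<in> X \<Longrightarrow> (x, w) \<notin> A"
  by (subst (asm) leaves_eq_sinks) (simp add: outdeg_eq_0_iff[OF finite_arcs])

lemma non_leaf_has_child:
  assumes "v \<in> V" "v \<notin> X"
  shows "\<exists>w. (v, w) \<in> A"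
proof -
  have "outdeg A v \<noteq> 0" using assms leaves_eq_sinks by (metis (mono_tags, lifting) mem_Collect_eq)
  then show ?thesis by (simp add: outdeg_eq_0_iff[OF finite_arcs])
qed

lemma tree_vertex_unique_parent:
  "v \<in> V \<Longrightarrow> v \<noteq> net_root V A \<Longrightarrow> \<not> reticulation V A v \<Longrightarrow> \<exists>!u. (u, v) \<in> A"
  by (metis indeg_eq_1_iff non_root_indeg_1_or_reticulation)

lemma reticulation_not_leaf: "reticulation V A v \<Longrightarrow> v \<notin> X"
  using leaf_no_child unfolding reticulation_def outdeg_eq_1_iff by (metis ex1E)

lemma reticulation_not_root: "reticulation V A v \<Longrightarrow> v \<noteq> net_root V A"
  using indeg_root unfolding reticulation_def by auto

context
  fixes T assumes support_tree: "support_tree V A X T"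
begin

lemma support_tree_subset: "T \<subseteq> A"
  using support_tree unfolding support_tree_def by blast

lemma support_tree_unique_parent: "v \<in> V \<Longrightarrow> v \<noteq> net_root V A \<Longrightarrow> \<exists>!u. (u, v) \<in> T"
  using support_tree unfolding support_tree_def indeg_eq_1_iff by blast

lemma support_tree_non_leaf_has_child: "v \<in> V \<Longrightarrow> v \<notin> X \<Longrightarrow> \<exists>w. (v, w) \<in> T"
  using support_tree unfolding support_tree_def outdeg_def by fastforce

lemma support_tree_contains_arc_into_tree_vertex:
  assumes "(u, v) \<in> A" "\<not> reticulation V A v"
  shows "(u, v) \<in> T"
proof -
  have v: "v \<in> V" "v \<noteq> net_root V A"
    using assms(1) arcs_in_V no_arc_into_root by blast+
  then obtain u' where "(u', v) \<in> T" using support_tree_unique_parent by blast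
  with assms v show ?thesis
    using tree_vertex_unique_parent support_tree_subset by blast
qed

lemma support_tree_contains_arc_out_of_reticulation:
  assumes "(p, v) \<in> A" "reticulation V A p"
  shows "(p, v) \<in> T"
proof -
  have "p \<in> V" "p \<notin> X"
    using assms(2) reticulation_not_leaf unfolding reticulation_def by blast+
  then obtain w where w: "(p, w) \<in> T" using support_tree_non_leaf_has_child by blast
  then have "v = w" using reticulation_child_unique[OF assms(2,1)] support_tree_subset by blast
  with w show ?thesis by simp
qed

lemma support_tree_parent_reticulation:
  assumes "reticulation V A v" "v \<notin> R_t V A" "(u, v) \<in> T"
  shows "reticulation V A u"
proof -
  obtain p where p: "(p, v) \<in> A" "reticulation V A p"
    using assms(1,2) unfolding R_t_def by blast
  have "(p, v) \<in> T" using support_tree_contains_arc_out_of_reticulation[OF p] .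
  moreover have "v \<in> V" "v \<noteq> net_root V A"
    using assms(1) reticulation_not_root unfolding reticulation_def by blast+
  ultimately have "u = p" using assms(3) support_tree_unique_parent by blast
  with p show ?thesis by simp
qed

lemma support_tree_arc_from_omnian_into_R_t:
  assumes "omnian V A X w" "\<not> reticulation V A w"
  shows "\<exists>r \<in> R_t V A. (w, r) \<in> T"
proof -
  obtain r where r: "(w, r) \<in> T"
    using assms(1) support_tree_non_leaf_has_child unfolding omnian_def by blast
  then have "reticulation V A r"
    using assms(1) support_tree_subset unfolding omnian_def by blast
  then have "r \<in> R_t V A" using support_tree_parent_reticulation r assms(2) by blast
  with r show ?thesis by blast
qed

lemma tree_of_used_J_edges: "tree_of_J_edges V A (used_J_edges V A T) = T"
proof (intro set_eqI iffI; clarify)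
  fix u v assume uv: "(u, v) \<in> T"
  then show "(u, v) \<in> tree_of_J_edges V A (used_J_edges V A T)"
    using support_tree_parent_reticulation support_tree_subset
    unfolding tree_of_J_edges_def used_J_edges_def by blast
next
  fix u v assume "(u, v) \<in> tree_of_J_edges V A (used_J_edges V A T)"
  then show "(u, v) \<in> T"
    using support_tree_contains_arc_into_tree_vertex
      support_tree_contains_arc_out_of_reticulation
      used_J_edge_at_R_t[OF support_tree_subset]
    unfolding tree_of_J_edges_def by (fastforce simp: doubleton_eq_iff)
qed

lemma used_J_edges_at_R_t:
  assumes "r \<in> R_t V A"
  shows "{e \<in> used_J_edges V A T. r \<in> e} = {{u, r} | u. (u, r) \<in> T}"
proof
  show "{e \<in> used_J_edges V A T. r \<in> e} \<subseteq> {{u, r} | u. (u, r) \<in> T}"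
    using used_J_edge_at_R_t[OF support_tree_subset _ _ assms] by blast
  show "{{u, r} | u. (u, r) \<in> T} \<subseteq> {e \<in> used_J_edges V A T. r \<in> e}"
    using assms unfolding used_J_edges_def by blast
qed

lemma supporting_set_used_J_edges: "supporting_set V A X (used_J_edges V A T)"
  unfolding supporting_set_def
proof (intro conjI ballI impI)
  show "used_J_edges V A T \<subseteq> J_edges V A"
  proof
    fix e assume "e \<in> used_J_edges V A T"
    then obtain q r where qr: "e = {q, r}" "(q, r) \<in> T" "r \<in> R_t V A"
      unfolding used_J_edges_def by blast
    then have "(q, r) \<in> A" using support_tree_subset by blast
    moreover from this have "q \<in> Q_t V A" using qr(3) arcs_in_V unfolding Q_t_def by blast
    ultimately show "e \<in> J_edges V A" using qr unfolding J_edges_def by blast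
  qed
next
  fix q assume "q \<in> Q_t V A" "omnian V A X q"
  then obtain r where "r \<in> R_t V A" "(q, r) \<in> T"
    using support_tree_arc_from_omnian_into_R_t Q_t_not_reticulation by meson
  then have "{q, r} \<in> used_J_edges V A T" unfolding used_J_edges_def by blast
  then show "\<exists>e \<in> used_J_edges V A T. q \<in> e" by blast
next
  fix r assume r: "r \<in> R_t V A"
  then have "reticulation V A r" by (rule R_t_reticulation)
  then have "r \<in> V" "r \<noteq> net_root V A"
    using reticulation_not_root unfolding reticulation_def by simp_all
  then obtain u where "(u, r) \<in> T" "\<And>u'. (u', r) \<in> T \<Longrightarrow> u' = u"
    using support_tree_unique_parent by blast
  then have "{{u, r} | u. (u, r) \<in> T} = {{u, r}}" by blast
  then show "card {e \<in> used_J_edges V A T. r \<in> e} = 1"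
    using used_J_edges_at_R_t[OF r] by simp
qed

end

end

locale tree_based_network = phylo_network +
  assumes tree_based: "tree_based V A X"
begin

lemma reticulation_parent_unique:
  assumes "reticulation V A v" "(p, v) \<in> A" "reticulation V A p"
    and "(p', v) \<in> A" "reticulation V A p'"
  shows "p = p'"
proof -
  obtain T where T: "support_tree V A X T" using tree_based unfolding tree_based_def by blast
  have "v \<in> V" "v \<noteq> net_root V A"
    using assms(1) reticulation_not_root unfolding reticulation_def by blast+
  then show ?thesis
    using assms support_tree_contains_arc_out_of_reticulation[OF T]
      support_tree_unique_parent[OF T] by blast
qed

lemma omnian_tree_vertex_in_Q_t: "omnian V A X w \<Longrightarrow> \<not> reticulation V A w \<Longrightarrow> w \<in> Q_t V A"
  using tree_based support_tree_arc_from_omnian_into_R_t support_tree_subset arcs_in_V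
  unfolding tree_based_def Q_t_def by blast

context
  fixes E assumes supporting_set: "supporting_set V A X E"
begin

lemma J_edges_supporting_set: "E \<subseteq> J_edges V A"
  using supporting_set unfolding supporting_set_def by blast

lemma unique_supporting_edge:
  assumes "r \<in> R_t V A"
  obtains q where "(q, r) \<in> A" "q \<in> Q_t V A" "{e \<in> E. r \<in> e} = {{q, r}}"
proof -
  have "card {e \<in> E. r \<in> e} = 1"
    using supporting_set assms unfolding supporting_set_def by blast
  then obtain e where e: "{e' \<in> E. r \<in> e'} = {e}" by (rule card_1_singletonE)
  then have "e \<in> J_edges V A" "r \<in> e" using J_edges_supporting_set by auto
  then obtain q where "e = {q, r}" "(q, r) \<in> A" "q \<in> Q_t V A"
    using J_edge_at_R_t[OF _ _ assms] by blast
  with e that show ?thesis by simp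
qed

lemma tree_of_J_edges_unique_parent:
  assumes "v \<in> V" "v \<noteq> net_root V A"
  shows "\<exists>!u. (u, v) \<in> tree_of_J_edges V A E"
proof (cases "reticulation V A v")
  case False
  then show ?thesis
    using tree_vertex_unique_parent[OF assms] unfolding tree_of_J_edges_def by simp
next
  case True
  show ?thesis
  proof (cases "v \<in> R_t V A")
    case False
    then obtain p where "(p, v) \<in> A" "reticulation V A p"
      using True unfolding R_t_def by blast
    with True False show ?thesis
      using reticulation_parent_unique unfolding tree_of_J_edges_def by auto
  next
    case R: True
    then obtain q where q: "(q, v) \<in> A" "q \<in> Q_t V A"
      and edge: "{e \<in> E. v \<in> e} = {{q, v}}"
      by (rule unique_supporting_edge)
    have "q \<noteq> v" using q(2) R Q_t_not_reticulation R_t_reticulation by metis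
    have selected: "{u, v} \<in> E \<longleftrightarrow> u = q" for u
    proof -
      have "{u, v} \<in> E \<longleftrightarrow> {u, v} \<in> {e \<in> E. v \<in> e}" by simp
      also have "\<dots> \<longleftrightarrow> u = q" using edge \<open>q \<noteq> v\<close> by (auto simp: doubleton_eq_iff)
      finally show ?thesis .
    qed
    have "(u, v) \<in> tree_of_J_edges V A E \<longleftrightarrow> u = q" for u
      using selected[of u] q(1) R R_t_reticulation[OF R] unfolding tree_of_J_edges_def by auto
    then show ?thesis by simp
  qed
qed

lemma tree_of_J_edges_non_leaf_has_child:
  assumes "v \<in> V" "v \<notin> X"
  shows "\<exists>w. (v, w) \<in> tree_of_J_edges V A E"
proof (cases "\<forall>c. (v, c) \<in> A \<longrightarrow> reticulation V A c")
  case False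
  then show ?thesis unfolding tree_of_J_edges_def by blast
next
  case children_reticulate: True
  show ?thesis
  proof (cases "reticulation V A v")
    case True
    obtain c where "(v, c) \<in> A" using non_leaf_has_child assms by blast
    with True have "(v, c) \<in> tree_of_J_edges V A E"
      unfolding tree_of_J_edges_def R_t_def by blast
    then show ?thesis by blast
  next
    case False
    have "omnian V A X v" using assms children_reticulate unfolding omnian_def by blast
    then obtain e where "e \<in> E" "v \<in> e"
      using omnian_tree_vertex_in_Q_t False supporting_set unfolding supporting_set_def by blast
    then obtain q r where qr: "e = {q, r}" "(q, r) \<in> A" "r \<in> R_t V A"
      using J_edges_supporting_set unfolding J_edges_def by blast
    have "v \<noteq> r" using False R_t_reticulation[OF qr(3)] by blast
    then have "v = q" using \<open>v \<in> e\<close> qr(1) by blast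
    with qr \<open>e \<in> E\<close> have "(v, r) \<in> tree_of_J_edges V A E"
      using R_t_reticulation unfolding tree_of_J_edges_def by blast
    then show ?thesis by blast
  qed
qed

lemma support_tree_tree_of_J_edges: "support_tree V A X (tree_of_J_edges V A E)"
proof -
  let ?T = "tree_of_J_edges V A E"
  have "?T \<subseteq> A" unfolding tree_of_J_edges_def by blast
  have "finite ?T" using finite_subset[OF \<open>?T \<subseteq> A\<close> finite_arcs] .
  have "indeg ?T (net_root V A) = 0"
    using no_arc_into_root \<open>?T \<subseteq> A\<close> indeg_eq_0_iff[OF \<open>finite ?T\<close>] by blast
  moreover have "\<forall>v \<in> V - {net_root V A}. indeg ?T v = 1"
    using tree_of_J_edges_unique_parent unfolding indeg_eq_1_iff by simp
  moreover have "\<forall>v \<in> V. (net_root V A, v) \<in> ?T\<^sup>*"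
  proof (intro ballI reachable_from_root_if_parents[OF wf_arcs \<open>?T \<subseteq> A\<close>])
    fix v assume "v \<in> V" "v \<noteq> net_root V A"
    then obtain u where "(u, v) \<in> ?T" using tree_of_J_edges_unique_parent by blast
    then show "\<exists>u \<in> V. (u, v) \<in> ?T" using \<open>?T \<subseteq> A\<close> arcs_in_V by blast
  qed
  moreover have "{v \<in> V. outdeg ?T v = 0} = X"
  proof (intro set_eqI iffI)
    fix v assume "v \<in> {v \<in> V. outdeg ?T v = 0}"
    then show "v \<in> X"
      using tree_of_J_edges_non_leaf_has_child outdeg_eq_0_iff[OF \<open>finite ?T\<close>] by blast
  next
    fix x assume "x \<in> X"
    then show "x \<in> {v \<in> V. outdeg ?T v = 0}"
      using leaf_no_child leaves_in_V \<open>?T \<subseteq> A\<close> outdeg_eq_0_iff[OF \<open>finite ?T\<close>] by blast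
  qed
  ultimately show ?thesis using \<open>?T \<subseteq> A\<close> unfolding support_tree_def by blast
qed

end

end

theorem corollary1:
  fixes V :: "'v set" and A :: "('v \<times> 'v) set" and X :: "'v set"
  assumes "phylo_net V A X" and "tree_based V A X"
  shows "card (SupTrees V A X) = card {E. supporting_set V A X E}"
proof -
  interpret tree_based_network V A X
    using assms by unfold_locales
  have "bij_betw (used_J_edges V A) (SupTrees V A X) {E. supporting_set V A X E}"
  proof (rule bij_betw_byWitness[where f' = "tree_of_J_edges V A"])
    show "\<forall>T \<in> SupTrees V A X. tree_of_J_edges V A (used_J_edges V A T) = T"
      using tree_of_used_J_edges unfolding SupTrees_def by blast
    show "\<forall>E \<in> {E. supporting_set V A X E}. used_J_edges V A (tree_of_J_edges V A E) = E"
      using used_J_edges_tree_of_J_edges J_edges_supporting_set by blast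
    show "used_J_edges V A ` SupTrees V A X \<subseteq> {E. supporting_set V A X E}"
      using supporting_set_used_J_edges unfolding SupTrees_def by blast
    show "tree_of_J_edges V A ` {E. supporting_set V A X E} \<subseteq> SupTrees V A X"
      using support_tree_tree_of_J_edges unfolding SupTrees_def by blast
  qed
  then show ?thesis by (rule bij_betw_same_card)
qed

end
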